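(* Let $n\ge 3$. There is no finite subset $Y\subseteq\mathbb{S}^{n-1}$ which is a spherical design of harmonic index $\{6,2\}$ and has \[|Y|=\frac{n(n+4)(2n+1)^2}{15(7n-4)},\] i.e. there exists no tight spherical design of harmonic index $\{6,2\}$ on $\mathbb{S}^{n-1}$ for $n\ge3$.
   Context: $\mathbb{S}^{n-1}$ is the unit sphere in $\mathbb{R}^n$. For $T\subseteq\mathbb{N}$, a finite $Y\subseteq\mathbb{S}^{n-1}$ is a spherical design of harmonic index $T$ if $\sum_{\mathbf{x}\in Y}f(\mathbf{x})=0$ for every real homogeneous harmonic polynomial $f$ in $n$ variables whose degree lies in $T$. With Gegenbauer polynomials $Q_{n,k}$ (orthogonal on $[-1,1]$ for the weight $(1-x^2)^{(n-3)/2}$, $Q_{n,k}(1)=\binom{n+k-1}{n-1}-\binom{n+k-3}{n-1}$; e.g. $Q_{n,2}(x)=\frac{(n+2)(nx^2-1)}{2}$), the polynomial $Q_{n,6}(x)+f_2Q_{n,2}(x)$ with $f_2=\frac{(n-2)(n+4)(n+10)}{32(n+8)}$ equals $ax^2(x^2-\alpha^2)^2-c_{n,T}$ with $a>0$, $\alpha^2=\frac{15}{2(n+8)}$, $c_{n,T}=\frac{(n+2)(n+6)(n+10)(7n-4)}{192(n+8)}$, giving the lower bound $|Y|\ge b_{n,T}=\frac{n(n+4)(2n+1)^2}{15(7n-4)}$ for designs of harmonic index $\{6,2\}$; a design attaining it is called tight. *)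

theory Defs
  imports "HOL-Analysis.Analysis"
begin

text \<open>A real polynomial in the variables indexed by the finite type 'n is represented
  by its coefficient function on exponent vectors (monomials), required to have finite support.\<close>

definition is_poly :: "(('n::finite \<Rightarrow> nat) \<Rightarrow> real) \<Rightarrow> bool" where
  "is_poly c \<longleftrightarrow> finite {a. c a \<noteq> 0}"

definition poly_eval :: "(('n::finite \<Rightarrow> nat) \<Rightarrow> real) \<Rightarrow> real ^ 'n \<Rightarrow> real" where
  "poly_eval c x = (\<Sum>a\<in>{a. c a \<noteq> 0}. c a * (\<Prod>i\<in>UNIV. (x $ i) ^ (a i)))"

definition homogeneous_of_degree :: "nat \<Rightarrow> (('n::finite \<Rightarrow> nat) \<Rightarrow> real) \<Rightarrow> bool" where
  "homogeneous_of_degree k c \<longleftrightarrow> (\<forall>a. c a \<noteq> 0 \<longrightarrow> (\<Sum>i\<in>UNIV. a i) = k)"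

text \<open>Harmonic: the (formal) Laplacian vanishes. The coefficient of the monomial with
  exponent b in sum_i d^2 f / dx_i^2 is sum_i (b i + 2)(b i + 1) c(b + 2 e_i).\<close>
definition harmonic_poly :: "(('n::finite \<Rightarrow> nat) \<Rightarrow> real) \<Rightarrow> bool" where
  "harmonic_poly c \<longleftrightarrow>
     (\<forall>b. (\<Sum>i\<in>UNIV. real ((b i + 2) * (b i + 1)) * c (b(i := b i + 2))) = 0)"

definition harmonic_index_design :: "nat set \<Rightarrow> (real ^ 'n::finite) set \<Rightarrow> bool" where
  "harmonic_index_design T Y \<longleftrightarrow>
     finite Y \<and> Y \<subseteq> sphere 0 1 \<and>
     (\<forall>c k. is_poly c \<and> homogeneous_of_degree k c \<and> harmonic_poly c \<and> k \<in> T
        \<longrightarrow> (\<Sum>x\<in>Y. poly_eval c x) = 0)"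

end

theory Submission
  imports Defs "HOL-Computational_Algebra.Primes"
begin

text \<open>Zonal harmonic polynomials of degrees 2 and 6 turn the design conditions into
  \<open>\<Sum>x\<in>Y. (u \<bullet> x)\<^sup>2 = N |u|\<^sup>2 / n\<close> and \<open>\<Sum>x\<in>Y. P\<^sub>6 (y \<bullet> x) = 0\<close> for unit \<open>y\<close>, where
  \<open>P\<^sub>6\<close> is the monic Gegenbauer polynomial. A combination of the two identities sums the
  non-negative polynomial \<open>t\<^sup>2 (t\<^sup>2 - \<alpha>\<^sup>2)\<^sup>2\<close> over \<open>Y\<close>; when \<open>N = |Y|\<close> attains the bound, the sum is
  already exhausted by the term \<open>x = y\<close>, so distinct points have inner products \<open>0\<close> or \<open>\<plusminus>\<alpha>\<close>,
  \<open>\<alpha>\<^sup>2 = 15 / (2 (n + 8))\<close>. Integrality of the bound leaves only \<open>n = 12\<close> and \<open>n = 92\<close>, where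
  \<open>\<alpha>\<close> is irrational. Polarizing the degree 2 identity at two points with inner product \<open>\<plusminus>\<alpha>\<close>
  then exhibits \<open>\<alpha>\<close> as a rational number unless \<open>N \<in> {n, 2n}\<close>, which the bound excludes.\<close>

definition poly_one :: "('n::finite \<Rightarrow> nat) \<Rightarrow> real" where
  "poly_one a = (if a = (\<lambda>_. 0) then 1 else 0)"

definition mult_var :: "'n::finite \<Rightarrow> (('n \<Rightarrow> nat) \<Rightarrow> real) \<Rightarrow> ('n \<Rightarrow> nat) \<Rightarrow> real" where
  "mult_var i p a = (if a i = 0 then 0 else p (a(i := a i - 1)))"

definition diff_var :: "'n::finite \<Rightarrow> (('n \<Rightarrow> nat) \<Rightarrow> real) \<Rightarrow> ('n \<Rightarrow> nat) \<Rightarrow> real" where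
  "diff_var i p a = real (a i + 1) * p (a(i := a i + 1))"

definition laplacian :: "(('n::finite \<Rightarrow> nat) \<Rightarrow> real) \<Rightarrow> ('n \<Rightarrow> nat) \<Rightarrow> real" where
  "laplacian p b = (\<Sum>i\<in>UNIV. real ((b i + 2) * (b i + 1)) * p (b(i := b i + 2)))"

definition mult_linear :: "real^'n::finite \<Rightarrow> (('n \<Rightarrow> nat) \<Rightarrow> real) \<Rightarrow> ('n \<Rightarrow> nat) \<Rightarrow> real" where
  "mult_linear v p a = (\<Sum>i\<in>UNIV. v$i * mult_var i p a)"

definition diff_dir :: "real^'n::finite \<Rightarrow> (('n \<Rightarrow> nat) \<Rightarrow> real) \<Rightarrow> ('n \<Rightarrow> nat) \<Rightarrow> real" where
  "diff_dir v p a = (\<Sum>i\<in>UNIV. v$i * diff_var i p a)"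

definition mult_norm2 :: "(('n::finite \<Rightarrow> nat) \<Rightarrow> real) \<Rightarrow> ('n \<Rightarrow> nat) \<Rightarrow> real" where
  "mult_norm2 p a = (\<Sum>i\<in>UNIV. mult_var i (mult_var i p) a)"

lemma harmonic_poly_iff_laplacian: "harmonic_poly p \<longleftrightarrow> (\<forall>b. laplacian p b = 0)"
  by (simp add: harmonic_poly_def laplacian_def)

lemma mult_var_add: "mult_var i (\<lambda>b. f b + g b) = (\<lambda>a. mult_var i f a + mult_var i g a)"
  by (simp add: mult_var_def fun_eq_iff)

lemma mult_var_cmult: "mult_var i (\<lambda>b. c * f b) = (\<lambda>a. c * mult_var i f a)"
  by (simp add: mult_var_def fun_eq_iff)

lemma mult_var_sum: "mult_var i (\<lambda>b. \<Sum>j\<in>J. f j b) a = (\<Sum>j\<in>J. mult_var i (f j) a)"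
  by (simp add: mult_var_def)

lemma diff_var_add: "diff_var i (\<lambda>b. f b + g b) a = diff_var i f a + diff_var i g a"
  by (simp add: diff_var_def algebra_simps)

lemma diff_var_cmult: "diff_var i (\<lambda>b. c * f b) a = c * diff_var i f a"
  by (simp add: diff_var_def)

lemma diff_var_sum: "diff_var i (\<lambda>b. \<Sum>j\<in>J. f j b) a = (\<Sum>j\<in>J. diff_var i (f j) a)"
  by (simp add: diff_var_def sum_distrib_left)

lemma laplacian_add: "laplacian (\<lambda>b. f b + g b) a = laplacian f a + laplacian g a"
  by (simp add: laplacian_def algebra_simps sum.distrib)

lemma laplacian_cmult: "laplacian (\<lambda>b. c * f b) a = c * laplacian f a"
  by (simp add: laplacian_def sum_distrib_left algebra_simps)

lemma laplacian_sum: "laplacian (\<lambda>b. \<Sum>j\<in>J. f j b) a = (\<Sum>j\<in>J. laplacian (f j) a)"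
  by (simp add: laplacian_def sum_distrib_left sum.swap[of _ J])

lemma mult_norm2_add: "mult_norm2 (\<lambda>b. f b + g b) a = mult_norm2 f a + mult_norm2 g a"
  by (simp add: mult_norm2_def mult_var_add sum.distrib)

lemma mult_norm2_cmult: "mult_norm2 (\<lambda>b. c * f b) a = c * mult_norm2 f a"
  by (simp add: mult_norm2_def mult_var_cmult sum_distrib_left)

lemma mult_linear_cmult: "mult_linear v (\<lambda>b. c * f b) a = c * mult_linear v f a"
  by (simp add: mult_linear_def mult_var_cmult sum_distrib_left algebra_simps)

lemma laplacian_eq_sum_diff_var: "laplacian p a = (\<Sum>i\<in>UNIV. diff_var i (diff_var i p) a)"
  unfolding laplacian_def diff_var_def by (intro sum.cong) (auto simp: algebra_simps)

lemma diff_var_mult_var: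
  "diff_var j (mult_var i p) a = (if i = j then p a else 0) + mult_var i (diff_var j p) a"
proof (cases "i = j")
  case True
  then show ?thesis
    by (cases "a i") (auto simp: diff_var_def mult_var_def fun_upd_idem algebra_simps)
next
  case False
  then show ?thesis
    by (auto simp: diff_var_def mult_var_def fun_upd_twist)
qed

lemma laplacian_mult_var: "laplacian (mult_var i p) a = 2 * diff_var i p a + mult_var i (laplacian p) a"
proof -
  have "laplacian (mult_var i p) a
      = (\<Sum>j\<in>UNIV. (if i = j then 2 * diff_var j p a else 0) + mult_var i (diff_var j (diff_var j p)) a)"
    unfolding laplacian_eq_sum_diff_var
    by (intro sum.cong refl) (simp add: diff_var_mult_var[abs_def] diff_var_add diff_var_def)
  also have "\<dots> = 2 * diff_var i p a + mult_var i (laplacian p) a"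
    by (simp add: sum.distrib laplacian_eq_sum_diff_var[abs_def] mult_var_sum)
  finally show ?thesis .
qed

lemma laplacian_mult_linear:
  "laplacian (mult_linear v p) a = 2 * diff_dir v p a + mult_linear v (laplacian p) a"
  by (simp add: mult_linear_def[abs_def] diff_dir_def laplacian_sum laplacian_cmult laplacian_mult_var
      sum.distrib sum_distrib_left algebra_simps)

lemma diff_dir_mult_linear:
  "diff_dir u (mult_linear v p) a = (u \<bullet> v) * p a + mult_linear v (diff_dir u p) a"
proof -
  have delta: "(\<Sum>i\<in>UNIV. u$j * (v$i * (if i = j then p a else 0))) = u$j * v$j * p a" for j
    by (simp add: if_distrib sum.delta cong: if_cong)
  have "diff_dir u (mult_linear v p) a
      = (\<Sum>j\<in>UNIV. \<Sum>i\<in>UNIV. u$j * (v$i * ((if i = j then p a else 0) + mult_var i (diff_var j p) a)))"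
    by (simp add: diff_dir_def mult_linear_def[abs_def] diff_var_sum diff_var_cmult diff_var_mult_var
        sum_distrib_left)
  also have "\<dots> = (\<Sum>j\<in>UNIV. u$j * v$j * p a)
      + (\<Sum>j\<in>UNIV. \<Sum>i\<in>UNIV. u$j * (v$i * mult_var i (diff_var j p) a))"
    by (simp only: distrib_left sum.distrib delta)
  also have "\<dots> = (u \<bullet> v) * p a + mult_linear v (diff_dir u p) a"
  proof -
    have "mult_linear v (diff_dir u p) a = (\<Sum>j\<in>UNIV. \<Sum>i\<in>UNIV. u$j * (v$i * mult_var i (diff_var j p) a))"
      unfolding mult_linear_def diff_dir_def[abs_def] mult_var_sum mult_var_cmult sum_distrib_left
      by (subst sum.swap) (simp add: mult.left_commute)
    then show ?thesis
      by (simp add: inner_vec_def sum_distrib_right)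
  qed
  finally show ?thesis .
qed

definition exps_of_degree :: "nat \<Rightarrow> ('n::finite \<Rightarrow> nat) set" where
  "exps_of_degree k = {a. sum a UNIV = k}"

lemma finite_exps_of_degree: "finite (exps_of_degree k :: ('n::finite \<Rightarrow> nat) set)"
proof (rule finite_subset)
  show "exps_of_degree k \<subseteq> PiE (UNIV::'n set) (\<lambda>_. {..k})"
    by (auto simp: exps_of_degree_def PiE_UNIV_domain intro: member_le_sum[of _ UNIV, simplified])
qed (auto intro: finite_PiE)

lemma homogeneous_support: "homogeneous_of_degree k p \<Longrightarrow> {a. p a \<noteq> 0} \<subseteq> exps_of_degree k"
  by (auto simp: homogeneous_of_degree_def exps_of_degree_def)

lemma homogeneous_is_poly: "homogeneous_of_degree k p \<Longrightarrow> is_poly p"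
  unfolding is_poly_def using finite_subset[OF homogeneous_support finite_exps_of_degree] .

lemma sum_fun_upd_nat: "sum (a(i := x)) (UNIV::'n::finite set) + a i = sum a UNIV + (x::nat)"
proof -
  have "sum (a(i := x)) UNIV = x + sum a (UNIV - {i})"
    by (subst sum.remove[of _ i]) (auto intro!: sum.cong)
  moreover have "sum a UNIV = a i + sum a (UNIV - {i})"
    by (subst sum.remove[of _ i]) auto
  ultimately show ?thesis by simp
qed

lemma homogeneous_poly_one: "homogeneous_of_degree 0 poly_one"
  by (simp add: homogeneous_of_degree_def poly_one_def)

lemma homogeneous_mult_var:
  assumes "homogeneous_of_degree k p"
  shows "homogeneous_of_degree (Suc k) (mult_var i p)"
  unfolding homogeneous_of_degree_def
proof (intro allI impI)
  fix a :: "'a \<Rightarrow> nat"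
  assume "mult_var i p a \<noteq> 0"
  then have "a i \<noteq> 0" "p (a(i := a i - 1)) \<noteq> 0" by (auto simp: mult_var_def split: if_splits)
  with assms have "sum (a(i := a i - 1)) UNIV = k" by (auto simp: homogeneous_of_degree_def)
  with sum_fun_upd_nat[of a i "a i - 1"] \<open>a i \<noteq> 0\<close> show "sum a UNIV = Suc k" by simp
qed

lemma homogeneous_add:
  "homogeneous_of_degree k f \<Longrightarrow> homogeneous_of_degree k g \<Longrightarrow> homogeneous_of_degree k (\<lambda>b. f b + g b)"
  unfolding homogeneous_of_degree_def by (metis add.right_neutral)

lemma homogeneous_cmult: "homogeneous_of_degree k f \<Longrightarrow> homogeneous_of_degree k (\<lambda>b. c * f b)"
  by (auto simp: homogeneous_of_degree_def)

lemma homogeneous_sum: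
  "(\<And>j. j \<in> J \<Longrightarrow> homogeneous_of_degree k (f j)) \<Longrightarrow> homogeneous_of_degree k (\<lambda>b. \<Sum>j\<in>J. f j b)"
  unfolding homogeneous_of_degree_def by (metis (mono_tags, lifting) sum.neutral)

lemma homogeneous_mult_linear:
  "homogeneous_of_degree k p \<Longrightarrow> homogeneous_of_degree (Suc k) (mult_linear v p)"
  unfolding mult_linear_def[abs_def] by (intro homogeneous_sum homogeneous_cmult homogeneous_mult_var)

lemma homogeneous_mult_norm2:
  "homogeneous_of_degree k p \<Longrightarrow> homogeneous_of_degree (Suc (Suc k)) (mult_norm2 p)"
  unfolding mult_norm2_def[abs_def] by (intro homogeneous_sum homogeneous_mult_var)

lemma euler_identity:
  assumes "homogeneous_of_degree k p"
  shows "(\<Sum>i\<in>UNIV. mult_var i (diff_var i p) a) = real k * p a"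
proof -
  have "(\<Sum>i\<in>UNIV. mult_var i (diff_var i p) a) = real (sum a UNIV) * p a"
    unfolding mult_var_def diff_var_def of_nat_sum sum_distrib_right by (intro sum.cong) auto
  also have "\<dots> = real k * p a"
    using assms by (cases "p a = 0") (auto simp: homogeneous_of_degree_def)
  finally show ?thesis .
qed

lemma laplacian_mult_norm2:
  fixes p :: "('n::finite \<Rightarrow> nat) \<Rightarrow> real"
  assumes "homogeneous_of_degree k p"
  shows "laplacian (mult_norm2 p) a = (2 * real CARD('n) + 4 * real k) * p a + mult_norm2 (laplacian p) a"
proof -
  have "laplacian (mult_norm2 p) a
      = (\<Sum>i\<in>UNIV. 2 * p a + 4 * mult_var i (diff_var i p) a + mult_var i (mult_var i (laplacian p)) a)"
    unfolding mult_norm2_def[abs_def] laplacian_sum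
    by (intro sum.cong refl)
       (simp add: laplacian_mult_var diff_var_mult_var[abs_def] laplacian_mult_var[abs_def]
        mult_var_add mult_var_cmult algebra_simps)
  also have "\<dots> = (2 * real CARD('n) + 4 * real k) * p a + mult_norm2 (laplacian p) a"
    unfolding sum.distrib sum_distrib_left[symmetric] euler_identity[OF assms] mult_norm2_def[symmetric]
    by (simp add: algebra_simps)
  finally show ?thesis .
qed

definition monomial :: "('n::finite \<Rightarrow> nat) \<Rightarrow> real^'n \<Rightarrow> real" where
  "monomial a x = (\<Prod>i\<in>UNIV. (x $ i) ^ (a i))"

lemma poly_eval_superset:
  assumes "finite S" "{a. p a \<noteq> 0} \<subseteq> S"
  shows "poly_eval p x = (\<Sum>a\<in>S. p a * monomial a x)"
  unfolding poly_eval_def monomial_def by (rule sum.mono_neutral_left) (use assms in auto)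

lemma poly_eval_homogeneous:
  "homogeneous_of_degree k p \<Longrightarrow> poly_eval p x = (\<Sum>a\<in>exps_of_degree k. p a * monomial a x)"
  by (rule poly_eval_superset[OF finite_exps_of_degree homogeneous_support])

lemma poly_eval_add:
  assumes "homogeneous_of_degree k f" "homogeneous_of_degree k g"
  shows "poly_eval (\<lambda>b. f b + g b) x = poly_eval f x + poly_eval g x"
  by (simp add: poly_eval_homogeneous[OF homogeneous_add[OF assms]] poly_eval_homogeneous[OF assms(1)]
      poly_eval_homogeneous[OF assms(2)] distrib_right sum.distrib)

lemma poly_eval_cmult:
  assumes "homogeneous_of_degree k f"
  shows "poly_eval (\<lambda>b. c * f b) x = c * poly_eval f x"
  by (simp add: poly_eval_homogeneous[OF homogeneous_cmult[OF assms]] poly_eval_homogeneous[OF assms]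
      sum_distrib_left mult.assoc)

lemma poly_eval_sum:
  assumes "\<And>j. j \<in> J \<Longrightarrow> homogeneous_of_degree k (f j)"
  shows "poly_eval (\<lambda>b. \<Sum>j\<in>J. f j b) x = (\<Sum>j\<in>J. poly_eval (f j) x)"
  by (simp add: poly_eval_homogeneous[OF homogeneous_sum[OF assms]] poly_eval_homogeneous[OF assms]
      sum_distrib_right sum.swap[of _ J])

lemma monomial_Suc: "monomial (b(i := Suc (b i))) x = x$i * monomial b x"
proof -
  have "monomial (b(i := Suc (b i))) x = x$i ^ Suc (b i) * (\<Prod>j\<in>UNIV-{i}. x$j ^ b j)"
    unfolding monomial_def by (subst prod.remove[of _ i]) (auto intro!: prod.cong)
  moreover have "monomial b x = x$i ^ b i * (\<Prod>j\<in>UNIV-{i}. x$j ^ b j)"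
    unfolding monomial_def by (subst prod.remove[of _ i]) auto
  ultimately show ?thesis by simp
qed

lemma poly_eval_mult_var:
  assumes "homogeneous_of_degree k p"
  shows "poly_eval (mult_var i p) x = x$i * poly_eval p x"
proof -
  let ?g = "\<lambda>b. b(i := Suc (b i))"
  have inj: "inj ?g"
    by (rule injI) (metis fun_upd_same fun_upd_upd diff_Suc_1 fun_upd_triv)
  have "{a. mult_var i p a \<noteq> 0} \<subseteq> ?g ` exps_of_degree k"
  proof
    fix a assume "a \<in> {a. mult_var i p a \<noteq> 0}"
    then have "a i \<noteq> 0" "p (a(i := a i - 1)) \<noteq> 0" by (auto simp: mult_var_def split: if_splits)
    then show "a \<in> ?g ` exps_of_degree k"
      using homogeneous_support[OF assms] by (intro image_eqI[of _ _ "a(i := a i - 1)"]) auto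
  qed
  then have "poly_eval (mult_var i p) x = (\<Sum>a\<in>?g ` exps_of_degree k. mult_var i p a * monomial a x)"
    by (intro poly_eval_superset finite_imageI finite_exps_of_degree)
  also have "\<dots> = (\<Sum>b\<in>exps_of_degree k. x$i * (p b * monomial b x))"
    by (subst sum.reindex[OF inj_on_subset[OF inj subset_UNIV]])
       (simp add: mult_var_def monomial_Suc mult.left_commute)
  also have "\<dots> = x$i * poly_eval p x"
    by (simp add: poly_eval_homogeneous[OF assms] sum_distrib_left)
  finally show ?thesis .
qed

lemma poly_eval_mult_linear:
  assumes "homogeneous_of_degree k p"
  shows "poly_eval (mult_linear v p) x = (v \<bullet> x) * poly_eval p x"
proof -
  have "poly_eval (mult_linear v p) x = (\<Sum>i\<in>UNIV. v$i * (x$i * poly_eval p x))"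
    unfolding mult_linear_def[abs_def]
    by (simp add: poly_eval_sum[where k="Suc k"] homogeneous_cmult homogeneous_mult_var assms
        poly_eval_cmult[OF homogeneous_mult_var[OF assms]] poly_eval_mult_var[OF assms])
  then show ?thesis by (simp add: inner_vec_def sum_distrib_right mult.assoc)
qed

lemma poly_eval_mult_norm2:
  assumes "homogeneous_of_degree k p"
  shows "poly_eval (mult_norm2 p) x = (x \<bullet> x) * poly_eval p x"
proof -
  have "poly_eval (mult_norm2 p) x = (\<Sum>i\<in>UNIV. x$i * (x$i * poly_eval p x))"
    unfolding mult_norm2_def[abs_def]
    by (simp add: poly_eval_sum[where k="Suc (Suc k)"] homogeneous_mult_var assms
        poly_eval_mult_var[OF homogeneous_mult_var[OF assms]] poly_eval_mult_var[OF assms])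
  then show ?thesis by (simp add: inner_vec_def sum_distrib_right mult.assoc)
qed

lemma poly_eval_poly_one: "poly_eval poly_one x = 1"
  by (subst poly_eval_superset[of "{\<lambda>_. 0}"]) (auto simp: poly_one_def monomial_def split: if_splits)

definition zonal_monomial :: "real^'n::finite \<Rightarrow> nat \<Rightarrow> nat \<Rightarrow> ('n \<Rightarrow> nat) \<Rightarrow> real" where
  "zonal_monomial y j k = (mult_norm2 ^^ j) ((mult_linear y ^^ k) poly_one)"

lemma zonal_monomial_0_0: "zonal_monomial y 0 0 = poly_one"
  and zonal_monomial_0_Suc: "zonal_monomial y 0 (Suc k) = mult_linear y (zonal_monomial y 0 k)"
  and zonal_monomial_Suc: "zonal_monomial y (Suc j) k = mult_norm2 (zonal_monomial y j k)"
  by (simp_all add: zonal_monomial_def)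

lemma homogeneous_zonal_monomial: "homogeneous_of_degree (2 * j + k) (zonal_monomial y j k)"
proof (induction j)
  case 0
  show ?case
    by (induction k) (simp_all add: zonal_monomial_0_0 zonal_monomial_0_Suc homogeneous_poly_one
        homogeneous_mult_linear)
next
  case (Suc j)
  then show ?case by (simp add: zonal_monomial_Suc homogeneous_mult_norm2)
qed

lemma poly_eval_zonal_monomial: "poly_eval (zonal_monomial y j k) x = (x \<bullet> x) ^ j * (y \<bullet> x) ^ k"
proof (induction j)
  case 0
  show ?case
    by (induction k) (simp_all add: zonal_monomial_0_0 zonal_monomial_0_Suc poly_eval_poly_one
        poly_eval_mult_linear[OF homogeneous_zonal_monomial])
next
  case (Suc j)
  then show ?case by (simp add: zonal_monomial_Suc poly_eval_mult_norm2[OF homogeneous_zonal_monomial])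
qed

lemma poly_one_fun_upd_Suc: "poly_one (a(i := Suc m)) = 0"
  by (auto simp: poly_one_def fun_eq_iff dest: spec[of _ i])

lemma diff_dir_zonal_monomial:
  "diff_dir y (zonal_monomial y 0 k) a = real k * (y \<bullet> y) * zonal_monomial y 0 (k - 1) a"
proof (induction k arbitrary: a)
  case 0
  then show ?case by (simp add: zonal_monomial_0_0 diff_dir_def diff_var_def poly_one_fun_upd_Suc)
next
  case (Suc k)
  have "diff_dir y (zonal_monomial y 0 (Suc k)) a
      = (y \<bullet> y) * zonal_monomial y 0 k a
        + real k * (y \<bullet> y) * mult_linear y (zonal_monomial y 0 (k - 1)) a"
    by (simp add: zonal_monomial_0_Suc diff_dir_mult_linear Suc.IH[abs_def] mult_linear_cmult)
  also have "\<dots> = real (Suc k) * (y \<bullet> y) * zonal_monomial y 0 k a"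
    by (cases k) (simp_all add: zonal_monomial_0_Suc algebra_simps)
  finally show ?case by simp
qed

lemma laplacian_zonal_monomial_0:
  "laplacian (zonal_monomial y 0 k) a = real k * (real k - 1) * (y \<bullet> y) * zonal_monomial y 0 (k - 2) a"
proof (induction k arbitrary: a)
  case 0
  then show ?case by (simp add: zonal_monomial_0_0 laplacian_def poly_one_fun_upd_Suc)
next
  case (Suc k)
  have "laplacian (zonal_monomial y 0 (Suc k)) a
      = 2 * (real k * (y \<bullet> y) * zonal_monomial y 0 (k - 1) a)
        + real k * (real k - 1) * (y \<bullet> y) * mult_linear y (zonal_monomial y 0 (k - 2)) a"
    by (simp add: zonal_monomial_0_Suc laplacian_mult_linear diff_dir_zonal_monomial Suc.IH[abs_def]
        mult_linear_cmult)
  also have "\<dots> = real (Suc k) * (real (Suc k) - 1) * (y \<bullet> y) * zonal_monomial y 0 (Suc k - 2) a"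
  proof (cases "k \<ge> 2")
    case True
    then have "mult_linear y (zonal_monomial y 0 (k - 2)) = zonal_monomial y 0 (k - 1)"
      by (metis zonal_monomial_0_Suc Suc_diff_le Suc_1 diff_Suc_Suc)
    with True show ?thesis by (simp add: algebra_simps Suc_diff_Suc numeral_2_eq_2)
  next
    case False
    then have "k = 0 \<or> k = 1" by arith
    then show ?thesis by auto
  qed
  finally show ?case .
qed

text \<open>The truncated differences \<open>k - 2\<close> and \<open>j - 1\<close> only occur with a vanishing coefficient.\<close>

lemma laplacian_zonal_monomial:
  fixes y :: "real^'n::finite"
  shows "laplacian (zonal_monomial y j k) a
    = real k * (real k - 1) * (y \<bullet> y) * zonal_monomial y j (k - 2) a
      + real j * (2 * real CARD('n) + 4 * real k + 4 * real j - 4) * zonal_monomial y (j - 1) k a"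
proof (induction j arbitrary: a)
  case 0
  then show ?case by (simp add: laplacian_zonal_monomial_0)
next
  case (Suc j)
  have "laplacian (zonal_monomial y (Suc j) k) a
      = (2 * real CARD('n) + 4 * real (2 * j + k)) * zonal_monomial y j k a
        + real k * (real k - 1) * (y \<bullet> y) * zonal_monomial y (Suc j) (k - 2) a
        + real j * (2 * real CARD('n) + 4 * real k + 4 * real j - 4)
          * mult_norm2 (zonal_monomial y (j - 1) k) a"
    by (simp add: zonal_monomial_Suc laplacian_mult_norm2[OF homogeneous_zonal_monomial] Suc.IH[abs_def]
        mult_norm2_add mult_norm2_cmult)
  also have "\<dots> = real k * (real k - 1) * (y \<bullet> y) * zonal_monomial y (Suc j) (k - 2) a
      + real (Suc j) * (2 * real CARD('n) + 4 * real k + 4 * real (Suc j) - 4) * zonal_monomial y j k a"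
    by (cases j) (simp_all add: zonal_monomial_Suc algebra_simps)
  finally show ?case by simp
qed

definition zonal_harmonic_2 :: "real^'n::finite \<Rightarrow> ('n \<Rightarrow> nat) \<Rightarrow> real" where
  "zonal_harmonic_2 u a = zonal_monomial u 0 2 a + (- (u \<bullet> u) / real CARD('n)) * zonal_monomial u 1 0 a"

lemma homogeneous_zonal_harmonic_2_terms:
  "homogeneous_of_degree 2 (zonal_monomial u 0 2)" "homogeneous_of_degree 2 (zonal_monomial u 1 0)"
  using homogeneous_zonal_monomial[of 0 2 u] homogeneous_zonal_monomial[of 1 0 u]
  by (simp_all only: mult_0_right mult_1_right add_0 add_0_right)

lemma homogeneous_zonal_harmonic_2: "homogeneous_of_degree 2 (zonal_harmonic_2 u)"
  unfolding zonal_harmonic_2_def[abs_def]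
  by (intro homogeneous_add homogeneous_cmult homogeneous_zonal_harmonic_2_terms)

lemma harmonic_zonal_harmonic_2: "harmonic_poly (zonal_harmonic_2 u)"
  unfolding harmonic_poly_iff_laplacian zonal_harmonic_2_def[abs_def] laplacian_add laplacian_cmult
    laplacian_zonal_monomial
  by (simp add: zonal_monomial_0_0)

lemma poly_eval_zonal_harmonic_2:
  "poly_eval (zonal_harmonic_2 u) x = (u \<bullet> x)^2 - (u \<bullet> u) / real CARD('n) * (x \<bullet> x)"
  for u :: "real^'n::finite"
proof -
  note hom = homogeneous_zonal_harmonic_2_terms[of u]
  show ?thesis
    unfolding zonal_harmonic_2_def[abs_def] poly_eval_add[OF hom(1) homogeneous_cmult[OF hom(2)]]
      poly_eval_cmult[OF hom(2)] poly_eval_zonal_monomial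
    by simp
qed

definition gegenbauer_6_coeff :: "real \<Rightarrow> nat \<Rightarrow> real" where
  "gegenbauer_6_coeff n j =
     [1, - 15 / (n + 8), 45 / ((n + 8) * (n + 6)), - 15 / ((n + 8) * (n + 6) * (n + 4))] ! j"

text \<open>\<open>monic_gegenbauer_6 n\<close> is \<open>Q\<^sub>n\<^sub>,\<^sub>6\<close> divided by its leading coefficient.\<close>

definition monic_gegenbauer_6 :: "real \<Rightarrow> real \<Rightarrow> real" where
  "monic_gegenbauer_6 n t = (\<Sum>j\<le>3. gegenbauer_6_coeff n j * t ^ (6 - 2 * j))"

definition zonal_harmonic_6 :: "real^'n::finite \<Rightarrow> ('n \<Rightarrow> nat) \<Rightarrow> real" where
  "zonal_harmonic_6 y a =
     (\<Sum>j\<le>3. gegenbauer_6_coeff (real CARD('n)) j * zonal_monomial y j (6 - 2 * j) a)"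

lemma homogeneous_zonal_harmonic_6_terms:
  "j \<in> {..3} \<Longrightarrow> homogeneous_of_degree 6 (zonal_monomial y j (6 - 2 * j))"
  using homogeneous_zonal_monomial[of j "6 - 2 * j" y] by simp

lemma homogeneous_zonal_harmonic_6: "homogeneous_of_degree 6 (zonal_harmonic_6 y)"
  unfolding zonal_harmonic_6_def[abs_def]
  by (intro homogeneous_sum homogeneous_cmult homogeneous_zonal_harmonic_6_terms)

lemma poly_eval_zonal_harmonic_6:
  fixes y :: "real^'n::finite"
  assumes "x \<bullet> x = 1"
  shows "poly_eval (zonal_harmonic_6 y) x = monic_gegenbauer_6 (real CARD('n)) (y \<bullet> x)"
proof -
  let ?c = "gegenbauer_6_coeff (real CARD('n))"
  have "poly_eval (zonal_harmonic_6 y) x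
      = (\<Sum>j\<le>3. poly_eval (\<lambda>a. ?c j * zonal_monomial y j (6 - 2 * j) a) x)"
    unfolding zonal_harmonic_6_def[abs_def]
    by (rule poly_eval_sum[where k=6]) (intro homogeneous_cmult homogeneous_zonal_harmonic_6_terms)
  also have "\<dots> = (\<Sum>j\<le>3. ?c j * (y \<bullet> x) ^ (6 - 2 * j))"
    by (intro sum.cong refl)
       (simp add: poly_eval_cmult[OF homogeneous_zonal_harmonic_6_terms] poly_eval_zonal_monomial assms)
  finally show ?thesis by (simp add: monic_gegenbauer_6_def)
qed

lemma harmonic_zonal_harmonic_6:
  fixes y :: "real^'n::finite"
  assumes "y \<bullet> y = 1"
  shows "harmonic_poly (zonal_harmonic_6 y)"
  unfolding harmonic_poly_iff_laplacian
proof
  fix b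
  define n where "n = real CARD('n)"
  let ?c = "gegenbauer_6_coeff n"
  have "n > 0" unfolding n_def by simp
  then have nonzero: "n + 8 \<noteq> 0" "(n + 8) * (n + 6) \<noteq> 0" "(n + 8) * (n + 6) * (n + 4) \<noteq> 0"
    by (simp_all add: add_pos_pos)
  then have coeffs: "30 + ?c 1 * (2 * n + 16) = 0" "12 * ?c 1 + ?c 2 * (4 * n + 24) = 0"
    "2 * ?c 2 + ?c 3 * (6 * n + 24) = 0"
    by (simp_all add: gegenbauer_6_coeff_def field_simps)
  have "?c 0 = 1" by (simp add: gegenbauer_6_coeff_def)
  moreover have "{..3::nat} = {0, 1, 2, 3}" by auto
  ultimately have "laplacian (zonal_harmonic_6 y) b
      = (30 + ?c 1 * (2 * n + 16)) * zonal_monomial y 0 4 b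
        + (12 * ?c 1 + ?c 2 * (4 * n + 24)) * zonal_monomial y 1 2 b
        + (2 * ?c 2 + ?c 3 * (6 * n + 24)) * zonal_monomial y 2 0 b"
    unfolding zonal_harmonic_6_def[abs_def] laplacian_sum laplacian_cmult laplacian_zonal_monomial
    by (simp add: assms n_def[symmetric] algebra_simps)
  also have "\<dots> = 0"
    by (simp only: coeffs mult_zero_left add_0)
  finally show "laplacian (zonal_harmonic_6 y) b = 0" .
qed

lemma harmonic_index_design_sum_eq_0:
  assumes "harmonic_index_design T Y" "homogeneous_of_degree k p" "harmonic_poly p" "k \<in> T"
  shows "(\<Sum>x\<in>Y. poly_eval p x) = 0"
  using assms homogeneous_is_poly unfolding harmonic_index_design_def by blast

lemma harmonic_index_design_inner_self: "harmonic_index_design T Y \<Longrightarrow> x \<in> Y \<Longrightarrow> x \<bullet> x = 1"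
  by (auto simp: harmonic_index_design_def power2_norm_eq_inner[symmetric])

lemma harmonic_index_design_sum_inner_square:
  fixes Y :: "(real^'n::finite) set"
  assumes "harmonic_index_design T Y" "2 \<in> T"
  shows "(\<Sum>x\<in>Y. (u \<bullet> x)^2) = real (card Y) * (u \<bullet> u) / real CARD('n)"
proof -
  have "(\<Sum>x\<in>Y. (u \<bullet> x)^2 - (u \<bullet> u) / real CARD('n)) = (\<Sum>x\<in>Y. poly_eval (zonal_harmonic_2 u) x)"
    using harmonic_index_design_inner_self[OF assms(1)] by (simp add: poly_eval_zonal_harmonic_2)
  also have "\<dots> = 0"
    by (rule harmonic_index_design_sum_eq_0[OF assms(1) homogeneous_zonal_harmonic_2
          harmonic_zonal_harmonic_2 assms(2)])
  finally show ?thesis by (simp add: sum_subtractf)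
qed

lemma harmonic_index_design_sum_gegenbauer_6:
  fixes Y :: "(real^'n::finite) set"
  assumes "harmonic_index_design T Y" "6 \<in> T" "y \<bullet> y = 1"
  shows "(\<Sum>x\<in>Y. monic_gegenbauer_6 (real CARD('n)) (y \<bullet> x)) = 0"
proof -
  have "(\<Sum>x\<in>Y. monic_gegenbauer_6 (real CARD('n)) (y \<bullet> x)) = (\<Sum>x\<in>Y. poly_eval (zonal_harmonic_6 y) x)"
    using harmonic_index_design_inner_self[OF assms(1)] by (simp add: poly_eval_zonal_harmonic_6)
  also have "\<dots> = 0"
    by (rule harmonic_index_design_sum_eq_0[OF assms(1) homogeneous_zonal_harmonic_6
          harmonic_zonal_harmonic_6[OF assms(3)] assms(2)])
  finally show ?thesis .
qed

definition harmonic_62_bound :: "real \<Rightarrow> real" where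
  "harmonic_62_bound n = n * (n + 4) * (2 * n + 1)^2 / (15 * (7 * n - 4))"

text \<open>The paper's \<open>Q\<^sub>n\<^sub>,\<^sub>6 + f\<^sub>2 Q\<^sub>n\<^sub>,\<^sub>2 = a x\<^sup>2 (x\<^sup>2 - \<alpha>\<^sup>2)\<^sup>2 - c\<^sub>n\<^sub>,\<^sub>T\<close>, divided by \<open>a\<close>.\<close>

lemma monic_gegenbauer_6_annihilator:
  fixes n t :: real
  assumes "n > 0"
  shows "monic_gegenbauer_6 n t + 45 * (n - 2) / (4 * (n + 8)^2 * (n + 6)) * (t^2 - 1 / n)
       = t^2 * (t^2 - 15 / (2 * (n + 8)))^2 - 15 * (7 * n - 4) / (4 * n * (n + 8)^2 * (n + 4))"
proof -
  define \<alpha>2 where "\<alpha>2 = 15 / (2 * (n + 8))"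
  define \<beta> where "\<beta> = 45 * (n - 2) / (4 * (n + 8)^2 * (n + 6))"
  define c where "c = 15 * (7 * n - 4) / (4 * n * (n + 8)^2 * (n + 4))"
  have "n + 8 \<noteq> 0" "n + 6 \<noteq> 0" "n + 4 \<noteq> 0" "n \<noteq> 0" using assms by linarith+
  then have coeff4: "- 15 / (n + 8) = - 2 * \<alpha>2"
    and coeff2: "45 / ((n + 8) * (n + 6)) + \<beta> = \<alpha>2^2"
    and coeff0: "- 15 / ((n + 8) * (n + 6) * (n + 4)) - \<beta> / n = - c"
    unfolding \<alpha>2_def \<beta>_def c_def by (simp_all add: divide_simps) algebra+
  have "{..3::nat} = {0, 1, 2, 3}" by auto
  then have "monic_gegenbauer_6 n t + \<beta> * (t^2 - 1 / n)
      = t^6 + (- 15 / (n + 8)) * t^4 + (45 / ((n + 8) * (n + 6)) + \<beta>) * t^2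
        + (- 15 / ((n + 8) * (n + 6) * (n + 4)) - \<beta> / n)"
    by (simp add: monic_gegenbauer_6_def gegenbauer_6_coeff_def algebra_simps)
  also have "\<dots> = t^2 * (t^2 - \<alpha>2)^2 - c"
    unfolding coeff4 coeff2 coeff0 by algebra
  finally show ?thesis
    unfolding \<alpha>2_def \<beta>_def c_def .
qed

lemma tight_design_inner_products:
  fixes Y :: "(real^'n::finite) set"
  assumes design: "harmonic_index_design {6, 2} Y"
    and tight: "real (card Y) = harmonic_62_bound (real CARD('n))"
    and "x \<in> Y" "y \<in> Y" "x \<noteq> y"
  shows "(y \<bullet> x)^2 = 0 \<or> (y \<bullet> x)^2 = 15 / (2 * (real CARD('n) + 8))"
proof -
  define n where "n = real CARD('n)"
  define \<alpha>2 where "\<alpha>2 = 15 / (2 * (n + 8))"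
  define \<beta> where "\<beta> = 45 * (n - 2) / (4 * (n + 8)^2 * (n + 6))"
  define c where "c = 15 * (7 * n - 4) / (4 * n * (n + 8)^2 * (n + 4))"
  define g where "g t = t^2 * (t^2 - \<alpha>2)^2" for t :: real
  have n: "n \<ge> 1" unfolding n_def by simp
  have fin: "finite Y" using design by (simp add: harmonic_index_design_def)
  have yy: "y \<bullet> y = 1" by (rule harmonic_index_design_inner_self[OF design assms(4)])
  have "g t - c = monic_gegenbauer_6 n t + \<beta> * (t^2 - 1 / n)" for t
    using monic_gegenbauer_6_annihilator[of n t] n by (simp add: g_def \<alpha>2_def \<beta>_def c_def)
  then have "(\<Sum>z\<in>Y. g (y \<bullet> z) - c)
      = (\<Sum>z\<in>Y. monic_gegenbauer_6 n (y \<bullet> z))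
        + \<beta> * ((\<Sum>z\<in>Y. (y \<bullet> z)^2) - real (card Y) / n)"
    by (simp add: sum.distrib sum_distrib_left[symmetric] sum_subtractf)
  also have "\<dots> = 0"
    using harmonic_index_design_sum_gegenbauer_6[OF design _ yy]
      harmonic_index_design_sum_inner_square[OF design]
    by (simp add: n_def yy)
  finally have "(\<Sum>z\<in>Y. g (y \<bullet> z)) = real (card Y) * c"
    by (simp add: sum_subtractf)
  moreover have "g (y \<bullet> y) = real (card Y) * c"
  proof -
    have "7 * n - 4 \<noteq> 0" "n + 8 \<noteq> 0" "n + 4 \<noteq> 0" using n by linarith+
    then show ?thesis
      using tight n
      by (simp add: yy g_def \<alpha>2_def c_def n_def[symmetric] harmonic_62_bound_def divide_simps)
         (simp add: power2_eq_square algebra_simps)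
  qed
  ultimately have "(\<Sum>z\<in>Y - {y}. g (y \<bullet> z)) = 0"
    using sum.remove[OF fin assms(4), of "\<lambda>z. g (y \<bullet> z)"] by simp
  then have "g (y \<bullet> x) = 0"
    using sum_nonneg_eq_0_iff[of "Y - {y}" "\<lambda>z. g (y \<bullet> z)"] fin assms(3,5) by (simp add: g_def)
  then show ?thesis by (simp add: g_def \<alpha>2_def n_def)
qed

lemma card_eq_dim_or_twice_dim_if_irrational_angles:
  fixes Y :: "(real^'n::finite) set"
  assumes fin: "finite Y" and nonempty: "Y \<noteq> {}"
    and unit: "\<And>x. x \<in> Y \<Longrightarrow> x \<bullet> x = 1"
    and sum_square: "\<And>u. (\<Sum>x\<in>Y. (u \<bullet> x)^2) = real (card Y) * (u \<bullet> u) / real CARD('n)"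
    and angles: "\<And>x y. x \<in> Y \<Longrightarrow> y \<in> Y \<Longrightarrow> x \<noteq> y \<Longrightarrow> (y \<bullet> x)^2 = 0 \<or> (y \<bullet> x)^2 = a"
    and a_rat: "a \<in> \<rat>" and a_not_square: "\<And>q. q \<in> \<rat> \<Longrightarrow> q^2 \<noteq> a"
  shows "card Y = CARD('n) \<or> card Y = 2 * CARD('n)"
proof (rule ccontr)
  define N n where "N = real (card Y)" and "n = real CARD('n)"
  assume "\<not> (card Y = CARD('n) \<or> card Y = 2 * CARD('n))"
  then have N_ne: "N / n \<noteq> 1" "N / n - 2 \<noteq> 0"
    by (auto simp: N_def n_def field_simps simp flip: of_nat_mult)
  obtain y where y: "y \<in> Y" using nonempty by blast
  have yy: "y \<bullet> y = 1" using unit[OF y] .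
  obtain z where z: "z \<in> Y" "z \<noteq> y" "(y \<bullet> z)^2 = a"
  proof -
    have "\<exists>z\<in>Y - {y}. (y \<bullet> z)^2 \<noteq> 0"
    proof (rule ccontr)
      assume "\<not> ?thesis"
      then have "(\<Sum>z\<in>Y - {y}. (y \<bullet> z)^2) = 0" by simp
      then have "N / n = 1"
        using sum.remove[OF fin y, of "\<lambda>z. (y \<bullet> z)^2"] sum_square[of y] yy fin y
        by (auto simp: N_def n_def card_gt_0_iff)
      with N_ne show False by simp
    qed
    then show ?thesis using that angles[OF _ y] by blast
  qed
  have polarization: "(\<Sum>x\<in>Y. (y \<bullet> x) * (z \<bullet> x)) = N / n * (y \<bullet> z)"
  proof -
    have "4 * (\<Sum>x\<in>Y. (y \<bullet> x) * (z \<bullet> x)) = (\<Sum>x\<in>Y. ((y + z) \<bullet> x)^2) - (\<Sum>x\<in>Y. ((y - z) \<bullet> x)^2)"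
      by (simp add: sum_subtractf[symmetric] sum_distrib_left inner_add_left inner_diff_left
          power2_eq_square algebra_simps)
    also have "\<dots> = 4 * (N / n * (y \<bullet> z))"
      unfolding sum_square
      by (simp add: N_def n_def inner_add_left inner_add_right inner_diff_left inner_diff_right
          inner_commute field_simps)
    finally show ?thesis by simp
  qed
  define S where "S = (\<Sum>x\<in>Y - {y} - {z}. (y \<bullet> x) * (z \<bullet> x))"
  have "(\<Sum>x\<in>Y. (y \<bullet> x) * (z \<bullet> x)) = 2 * (y \<bullet> z) + S"
    using sum.remove[OF fin y, of "\<lambda>x. (y \<bullet> x) * (z \<bullet> x)"]
      sum.remove[of "Y - {y}" z "\<lambda>x. (y \<bullet> x) * (z \<bullet> x)"] fin z yy unit[OF z(1)]
    by (simp add: S_def inner_commute)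
  with polarization have "y \<bullet> z = S / (N / n - 2)"
    using N_ne by (simp add: field_simps)
  moreover have "S \<in> \<rat>"
    unfolding S_def
  proof (rule Rats_sum)
    fix x assume x: "x \<in> Y - {y} - {z}"
    have "((y \<bullet> x) * (z \<bullet> x))^2 \<in> {0, a^2}"
      using angles[OF _ y, of x] angles[OF _ z(1), of x] x by (auto simp: power_mult_distrib)
    then have "(y \<bullet> x) * (z \<bullet> x) \<in> {0, a, - a}"
      using a_rat by (auto simp: power2_eq_iff)
    then show "(y \<bullet> x) * (z \<bullet> x) \<in> \<rat>"
      using a_rat by auto
  qed
  moreover have "N / n - 2 \<in> \<rat>"
    by (simp add: N_def n_def)
  ultimately have "y \<bullet> z \<in> \<rat>" by simp
  with z(3) a_not_square show False by blast
qed

lemma square_of_rat_neq_4k_plus_2: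
  fixes q :: real and r :: int
  assumes "q \<in> \<rat>"
  shows "q^2 \<noteq> of_int (4 * r + 2)"
proof
  assume sq: "q^2 = of_int (4 * r + 2)"
  obtain a b :: int where b: "b > 0" and cop: "coprime a b" and q: "q = of_int a / of_int b"
    using assms by (rule Rats_cases')
  have "(of_int a)^2 = (of_int ((4 * r + 2) * b^2) :: real)"
    using sq b by (simp add: q field_simps power2_eq_square)
  then have ab: "a^2 = (4 * r + 2) * b^2" by (metis of_int_eq_iff of_int_power)
  then have "a^2 = 2 * ((2 * r + 1) * b^2)" by (simp add: algebra_simps)
  then have "even (a^2)" by simp
  then have "even a" by simp
  then obtain c where "a = 2 * c" by blast
  with ab have "2 * c^2 = (2 * r + 1) * b^2" by (simp add: power2_eq_square algebra_simps)
  then have "even ((2 * r + 1) * b^2)" by (metis dvd_triv_left)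
  then have "even b" by simp
  with \<open>even a\<close> have "is_unit (2::int)" by (rule coprime_common_divisor[OF cop])
  then show False by simp
qed

lemma tight_angle_not_rat_square:
  fixes q :: real
  assumes "n = 12 \<or> n = 92" "q \<in> \<rat>"
  shows "q^2 \<noteq> 15 / (2 * (real n + 8))"
  using assms(1)
proof
  assume "n = 12"
  show ?thesis
  proof
    assume "q^2 = 15 / (2 * (real n + 8))"
    then have "(4 * q)^2 = of_int (4 * 1 + 2)" using \<open>n = 12\<close> by (simp add: power_mult_distrib)
    with square_of_rat_neq_4k_plus_2[of "4 * q" 1] assms(2) show False by simp
  qed
next
  assume "n = 92"
  show ?thesis
  proof
    assume "q^2 = 15 / (2 * (real n + 8))"
    then have "(20 * q)^2 = of_int (4 * 7 + 2)" using \<open>n = 92\<close> by (simp add: power_mult_distrib)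
    with square_of_rat_neq_4k_plus_2[of "20 * q" 7] assms(2) show False by simp
  qed
qed

text \<open>\<open>7n - 4\<close> divides \<open>7\<^sup>4 n (n + 4) (2n + 1)\<^sup>2\<close>, which is \<open>28800 = 2\<^sup>7 3\<^sup>2 5\<^sup>2\<close> modulo \<open>7n - 4\<close>.\<close>

lemma harmonic_62_bound_integral_dimensions:
  fixes n N :: nat
  assumes n3: "n \<ge> 3" and eq: "N * (15 * (7 * n - 4)) = n * (n + 4) * (2 * n + 1)^2"
  shows "n = 12 \<or> n = 92"
proof -
  define m where "m = 7 * n - 4"
  have m7: "7 * n = m + 4" using n3 unfolding m_def by simp
  have "m dvd n * (n + 4) * (2 * n + 1)^2"
    unfolding eq[symmetric] m_def by simp
  then have "m dvd 7^4 * (n * (n + 4) * (2 * n + 1)^2)"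
    by (rule dvd_mult)
  also have "7^4 * (n * (n + 4) * (2 * n + 1)^2) = (7 * n) * (7 * n + 28) * (2 * (7 * n) + 7)^2"
    by algebra
  also have "(7 * n) * (7 * n + 28) * (2 * (7 * n) + 7)^2
      = m * (4 * m^3 + 204 * m^2 + 2897 * m + 15780) + 28800"
    unfolding m7 by algebra
  finally have "m dvd 2^7 * (3^2 * 5^2)"
    by (simp add: dvd_add_right_iff)
  then obtain d2 d35 where d: "m = d2 * d35" "d2 dvd 2^7" "d35 dvd 3^2 * 5^2"
    using division_decomp by blast
  then obtain d3 d5 where d35: "d35 = d3 * d5" "d3 dvd 3^2" "d5 dvd 5^2"
    using division_decomp by blast
  have "prime (3::nat)" "prime (5::nat)"
    by (simp_all add: prime_nat_iff' atLeastLessThan_nat_numeral)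
  moreover obtain i where "i \<le> 7" "d2 = 2^i"
    using d(2) divides_primepow_nat[OF two_is_prime_nat] by blast
  moreover obtain j where "j \<le> 2" "d3 = 3^j"
    using d35(2) divides_primepow_nat[OF \<open>prime 3\<close>] by blast
  moreover obtain k where "k \<le> 2" "d5 = 5^k"
    using d35(3) divides_primepow_nat[OF \<open>prime 5\<close>] by blast
  ultimately have n: "7 * n = 2^i * 3^j * 5^k + 4" and
    "i = 0 \<or> i = 1 \<or> i = 2 \<or> i = 3 \<or> i = 4 \<or> i = 5 \<or> i = 6 \<or> i = 7"
    "j = 0 \<or> j = 1 \<or> j = 2" "k = 0 \<or> k = 1 \<or> k = 2"
    using m7 d d35 by (simp_all add: mult.assoc) arith+
  moreover have "n = (2^i * 3^j * 5^k + 4) div 7" "((2::nat)^i * 3^j * 5^k + 4) mod 7 = 0"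
    by (simp_all add: n[symmetric])
  ultimately have "n \<in> {1, 2, 4, 7, 12, 22, 28, 52, 92, 172, 412, 1372}"
    by (elim disjE) simp_all
  moreover have "n * (n + 4) * (2 * n + 1)^2 mod (15 * (7 * n - 4)) = 0"
    unfolding eq[symmetric] by simp
  ultimately show ?thesis
    using n3 by (elim insertE emptyE) simp_all
qed

lemma no_tight_harmonic_62_design:
  fixes Y :: "(real^'n::finite) set"
  assumes dim: "CARD('n) \<ge> 3" and design: "harmonic_index_design {6, 2} Y"
    and tight: "real (card Y) = harmonic_62_bound (real CARD('n))"
  shows False
proof -
  have "real (card Y * (15 * (7 * CARD('n) - 4)))
      = real (CARD('n) * (CARD('n) + 4) * (2 * CARD('n) + 1)^2)"
    using tight dim by (simp add: harmonic_62_bound_def of_nat_diff field_simps)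
  then have size: "card Y * (15 * (7 * CARD('n) - 4)) = CARD('n) * (CARD('n) + 4) * (2 * CARD('n) + 1)^2"
    by (simp only: of_nat_eq_iff)
  then have dims: "CARD('n) = 12 \<or> CARD('n) = 92"
    by (rule harmonic_62_bound_integral_dimensions[OF dim])
  have "Y \<noteq> {}" using size dim by auto
  moreover have "finite Y" using design by (simp add: harmonic_index_design_def)
  ultimately have "card Y = CARD('n) \<or> card Y = 2 * CARD('n)"
    using harmonic_index_design_sum_inner_square[OF design]
    by (intro card_eq_dim_or_twice_dim_if_irrational_angles[where a = "15 / (2 * (real CARD('n) + 8))"]
        harmonic_index_design_inner_self[OF design] tight_design_inner_products[OF design tight]
        tight_angle_not_rat_square[OF dims]) simp_all
  with size dims show False by auto
qed

theorem mainTheorem8: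
  assumes "CARD('n::finite) \<ge> 3"
  shows "\<not> (\<exists>Y :: (real ^ 'n) set. harmonic_index_design {6, 2} Y \<and>
            real (card Y) = (let n = real CARD('n) in
               n * (n + 4) * (2 * n + 1)^2 / (15 * (7 * n - 4))))"
  using no_tight_harmonic_62_design[OF assms] by (auto simp: harmonic_62_bound_def Let_def)

end
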